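(* Consider the FDMA/TDMA scheme at the serving AP of a typical UE, where the typical UE is the first UE in the ordering and is assigned SC 1, and $K_0\ge 0$ other UEs follow it in the ordering. For $l\ge 0$ let $\mathcal{A}_l$ be the event that exactly $l$ of the other $K_0$ UEs are assigned SC 1 (so the delay is $L=l$). Then $$\Pr\{\mathcal{A}_0\mid K_0\}=\begin{cases}1,& 0\le K_0\le N-1,\\ \frac{2N-K_0-1}{N},& N\le K_0\le 2N-2,\\ 0,& K_0\ge 2N-1,\end{cases}$$ and for $l\ge 1$ $$\Pr\{\mathcal{A}_l\mid K_0\}=\begin{cases}0,& 0\le K_0\le lN-1,\\ \frac{K_0-lN+1}{N},& lN\le K_0\le (l+1)N-1,\\ \frac{(l+2)N-K_0-1}{N},& (l+1)N\le K_0\le (l+2)N-2,\\ 0,& K_0\ge (l+2)N-1.\end{cases}$$ Consequently, if $K_0$ is random with PMF $$\Pr\{K_0=k\}=\frac{3.5^{4.5}\,\Gamma(k+4.5)\,\tau^{4.5}}{\Gamma(4.5)\,k!\,(1+3.5\tau)^{k+4.5}},\quad k\ge 0,$$ and independent of the scheduling randomness, then $\Pr\{L=l\}=\sum_{k\ge 0}\Pr\{K_0=k\}\Pr\{\mathcal{A}_l\mid K_0=k\}$.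
   Context: There are $N\ge1$ subchannels (SCs). FDMA/TDMA scheme: the UEs of an AP are arranged in an order and split into consecutive blocks of $N$ UEs (the last block possibly smaller); within each block the UEs, in order, are assigned SCs sequentially uniformly at random without replacement from $\{1,\dots,N\}$, the available set being reset to $\{1,\dots,N\}$ at the start of each block; assignments are independent across blocks. UEs sharing an SC are time-multiplexed on it. Here the serving AP has $K_0+1$ UEs in total: the typical UE first (assigned SC 1), followed by $K_0$ other UEs in random order. The delay $L$ of the typical UE is the number of other UEs sharing its SC. *)

theory Defs
  imports "HOL-Probability.Probability"
begin

fun draw_seq :: "nat set \<Rightarrow> nat \<Rightarrow> nat list pmf" where
  "draw_seq A 0 = return_pmf []"
| "draw_seq A (Suc m) =
     bind_pmf (pmf_of_set A) (\<lambda>x.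
     bind_pmf (draw_seq (A - {x}) m) (\<lambda>xs. return_pmf (x # xs)))"

text \<open>Blocks of (at most) N consecutive UEs, each block drawing from the full
  set {1..N} afresh, independently across blocks. blocks N c r schedules
  r remaining UEs using at most c blocks (c = r always suffices when N >= 1;
  superfluous blocks are empty).\<close>
fun blocks :: "nat \<Rightarrow> nat \<Rightarrow> nat \<Rightarrow> nat list pmf" where
  "blocks N 0 r = return_pmf []"
| "blocks N (Suc c) r =
     bind_pmf (draw_seq {1..N} (min N r)) (\<lambda>b.
     bind_pmf (blocks N c (r - min N r)) (\<lambda>bs. return_pmf (b @ bs)))"

text \<open>SC assignment of all K0+1 UEs of the serving AP, in order: the typical UE
  is first and has SC 1; the remaining UEs of its block draw sequentially from
  the remaining SCs {1..N} - {1}; subsequent blocks draw from {1..N}.\<close>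
definition schedule :: "nat \<Rightarrow> nat \<Rightarrow> nat list pmf" where
  "schedule N K0 =
     bind_pmf (draw_seq ({1..N} - {1}) (min N (K0 + 1) - 1)) (\<lambda>first.
     bind_pmf (blocks N (K0 + 1) (K0 + 1 - min N (K0 + 1))) (\<lambda>rest.
     return_pmf (1 # first @ rest)))"

definition delay_pmf :: "nat \<Rightarrow> nat \<Rightarrow> nat pmf" where
  "delay_pmf N K0 = map_pmf (\<lambda>sc. count_list (tl sc) 1) (schedule N K0)"

end

theory Submission
  imports Defs
begin

text \<open>SC 1 is taken by the typical UE, so the other UEs of its block never get it
  and only the K0 + 1 - N UEs behind that block matter (a truncated difference,
  0 when the first block holds everybody). Writing K0 + 1 - N = q N + s with
  s < N, these form q full blocks, each using SC 1 exactly once, and one partial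
  block of s UEs, which uses SC 1 with probability s / N because a fixed element
  is among s draws without replacement from N with that probability. Hence
  L = q + B with B Bernoulli(s / N), and the piecewise formulas are this law
  expressed in terms of K0. The mixture formula is the law of total probability
  for bind_pmf over nat; it holds for every law of K0.\<close>

lemma pmf_bind_eq_suminf:
  fixes K :: "nat pmf" and f :: "nat \<Rightarrow> 'b pmf"
  shows "pmf (bind_pmf K f) l = (\<Sum>k. pmf K k * pmf (f k) l)"
proof -
  have "pmf (bind_pmf K f) l = integral\<^sup>L (count_space UNIV) (\<lambda>k. pmf K k * pmf (f k) l)"
    unfolding pmf_bind measure_pmf_eq_density
    by (subst integral_density) (auto simp: pmf_nonneg)
  also have "\<dots> = (\<Sum>k. pmf K k * pmf (f k) l)"
  proof (rule integral_count_space_nat)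
    have "integrable (measure_pmf K) (\<lambda>k. pmf (f k) l)"
      by (rule measure_pmf.integrable_const_bound[where B=1]) (auto simp: pmf_le_1)
    then show "integrable (count_space UNIV) (\<lambda>k. pmf K k * pmf (f k) l)"
      unfolding measure_pmf_eq_density
      by (subst (asm) integrable_density) (auto simp: pmf_nonneg)
  qed
  finally show ?thesis .
qed

definition shifted_bernoulli_pmf :: "nat \<Rightarrow> real \<Rightarrow> nat pmf" where
  "shifted_bernoulli_pmf q p = map_pmf (\<lambda>b. q + of_bool b) (bernoulli_pmf p)"

lemma pmf_shifted_bernoulli_pmf:
  assumes "0 \<le> p" "p \<le> 1"
  shows "pmf (shifted_bernoulli_pmf q p) v = (if v = q then 1 - p else if v = Suc q then p else 0)"
proof -
  have inj: "inj (\<lambda>b. q + of_bool b :: nat)"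
    unfolding inj_def of_bool_def by auto
  consider "v = q" | "v = Suc q" | "v \<notin> {q, Suc q}" by blast
  then show ?thesis
  proof cases
    case 1
    then show ?thesis unfolding shifted_bernoulli_pmf_def
      using pmf_map_inj'[OF inj, of "bernoulli_pmf p" False] assms by simp
  next
    case 2
    then show ?thesis unfolding shifted_bernoulli_pmf_def
      using pmf_map_inj'[OF inj, of "bernoulli_pmf p" True] assms by simp
  next
    case 3
    then show ?thesis unfolding shifted_bernoulli_pmf_def
      by (auto simp: pmf_eq_0_set_pmf)
  qed
qed

lemma map_Suc_shifted_bernoulli_pmf:
  "map_pmf Suc (shifted_bernoulli_pmf q p) = shifted_bernoulli_pmf (Suc q) p"
  by (simp add: shifted_bernoulli_pmf_def pmf.map_comp o_def)

lemma shifted_bernoulli_pmf_0: "shifted_bernoulli_pmf q 0 = return_pmf q"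
  by (rule pmf_eqI) (simp add: pmf_shifted_bernoulli_pmf split: split_indicator)

lemma shifted_bernoulli_pmf_1: "shifted_bernoulli_pmf q 1 = return_pmf (Suc q)"
  by (rule pmf_eqI) (simp add: pmf_shifted_bernoulli_pmf split: split_indicator)

lemma set_pmf_draw_seq:
  assumes "finite A" "m \<le> card A" "xs \<in> set_pmf (draw_seq A m)"
  shows "set xs \<subseteq> A"
  using assms
proof (induction m arbitrary: A xs)
  case (Suc m)
  have "A \<noteq> {}" using Suc.prems by auto
  with Suc.prems obtain x ys where x: "x \<in> A" and ys: "ys \<in> set_pmf (draw_seq (A - {x}) m)"
    and xs: "xs = x # ys"
    by (auto simp: set_pmf_of_set)
  have "m \<le> card (A - {x})" using x Suc.prems by simp
  with Suc.IH[OF _ this ys] Suc.prems x xs show ?case by auto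
qed simp

lemma count_list_draw_seq:
  assumes "finite A" "a \<in> A" "m \<le> card A"
  shows "map_pmf (\<lambda>xs. count_list xs a) (draw_seq A m) = shifted_bernoulli_pmf 0 (real m / real (card A))"
  using assms
proof (induction m arbitrary: A)
  case 0
  show ?case by (simp add: shifted_bernoulli_pmf_0)
next
  case (Suc m)
  let ?n = "card A"
  let ?tail = "\<lambda>x. map_pmf (\<lambda>xs. count_list (x # xs) a) (draw_seq (A - {x}) m)"
  have n: "?n \<ge> 1" and card_Diff: "\<And>x. x \<in> A \<Longrightarrow> card (A - {x}) = ?n - 1"
    using Suc.prems by auto
  have tail_a: "?tail a = return_pmf 1"
  proof -
    have "?tail a = map_pmf (\<lambda>_. 1) (draw_seq (A - {a}) m)"
    proof (rule map_pmf_cong[OF refl])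
      fix xs assume "xs \<in> set_pmf (draw_seq (A - {a}) m)"
      moreover have "m \<le> card (A - {a})" using Suc.prems card_Diff[of a] by simp
      ultimately have "a \<notin> set xs" using set_pmf_draw_seq[of "A - {a}" m xs] Suc.prems by blast
      then show "count_list (a # xs) a = 1" by simp
    qed
    then show ?thesis by (simp add: map_pmf_const)
  qed
  have tail_other: "?tail x = shifted_bernoulli_pmf 0 (real m / (real ?n - 1))" if "x \<in> A - {a}" for x
    using Suc.IH[of "A - {x}"] Suc.prems card_Diff[of x] that n by (auto simp: of_nat_diff)
  have first_draw: "map_pmf (\<lambda>xs. count_list xs a) (draw_seq A (Suc m)) = bind_pmf (pmf_of_set A) ?tail"
    by (simp add: map_bind_pmf map_pmf_def bind_assoc_pmf bind_return_pmf)
  show ?case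
  proof (rule pmf_eqI)
    fix v
    have "pmf (map_pmf (\<lambda>xs. count_list xs a) (draw_seq A (Suc m))) v
        = (\<Sum>x\<in>A. pmf (?tail x) v) / ?n"
      unfolding first_draw using Suc.prems by (subst pmf_bind_pmf_of_set) auto
    also have "(\<Sum>x\<in>A. pmf (?tail x) v) = pmf (?tail a) v + (\<Sum>x\<in>A - {a}. pmf (?tail x) v)"
      using Suc.prems by (simp add: sum.remove)
    also have "\<dots> = pmf (return_pmf 1) v + (\<Sum>x\<in>A - {a}. pmf (shifted_bernoulli_pmf 0 (real m / (real ?n - 1))) v)"
      by (simp only: tail_a tail_other cong: sum.cong)
    also have "\<dots> = of_bool (v = 1) + (?n - 1) * pmf (shifted_bernoulli_pmf 0 (real m / (real ?n - 1))) v"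
      using Suc.prems n by (simp add: indicator_def of_nat_diff)
    also have "\<dots> / ?n = pmf (shifted_bernoulli_pmf 0 (real (Suc m) / real ?n)) v"
    proof (cases "?n = 1")
      case True
      then have "m = 0" using Suc.prems by simp
      with True show ?thesis by (simp add: pmf_shifted_bernoulli_pmf)
    next
      case False
      then have "real ?n - 1 > 0" "real m \<le> real ?n - 1" using n Suc.prems by linarith+
      then show ?thesis
        using n by (simp add: pmf_shifted_bernoulli_pmf field_simps)
    qed
    finally show "pmf (map_pmf (\<lambda>xs. count_list xs a) (draw_seq A (Suc m))) v
        = pmf (shifted_bernoulli_pmf 0 (real (Suc m) / real ?n)) v" .
  qed
qed

lemma blocks_0: "blocks N c 0 = return_pmf []"
  by (induction c) (simp_all add: bind_return_pmf)

lemma count_list_blocks: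
  assumes "N \<ge> 1" "r \<le> c * N"
  shows "map_pmf (\<lambda>xs. count_list xs 1) (blocks N c r)
           = shifted_bernoulli_pmf (r div N) (real (r mod N) / real N)"
  using assms(2)
proof (induction c arbitrary: r)
  case 0
  then show ?case by (simp add: shifted_bernoulli_pmf_0)
next
  case (Suc c r)
  show ?case
  proof (cases "N \<le> r")
    case True
    let ?rest = "map_pmf (\<lambda>xs. count_list xs 1) (blocks N c (r - N))"
    have "map_pmf (\<lambda>xs. count_list xs 1) (blocks N (Suc c) r)
        = bind_pmf (draw_seq {1..N} N) (\<lambda>b. map_pmf (\<lambda>n. count_list b 1 + n) ?rest)"
      using True by (simp add: map_bind_pmf map_pmf_def bind_assoc_pmf bind_return_pmf)
    also have "\<dots> = bind_pmf (map_pmf (\<lambda>b. count_list b 1) (draw_seq {1..N} N))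
                          (\<lambda>k. map_pmf (\<lambda>n. k + n) ?rest)"
      by (simp add: bind_map_pmf)
    also have "map_pmf (\<lambda>b. count_list b 1) (draw_seq {1..N} N) = return_pmf 1"
      using count_list_draw_seq[of "{1..N}" 1 N] assms(1) by (simp add: shifted_bernoulli_pmf_1)
    also have "bind_pmf (return_pmf 1) (\<lambda>k. map_pmf (\<lambda>n. k + n) ?rest) = map_pmf Suc ?rest"
      by (simp only: bind_return_pmf plus_1_eq_Suc)
    also have "\<dots> = map_pmf Suc (shifted_bernoulli_pmf ((r - N) div N) (real ((r - N) mod N) / real N))"
      using Suc.prems by (subst Suc.IH) auto
    also have "\<dots> = shifted_bernoulli_pmf (Suc ((r - N) div N)) (real ((r - N) mod N) / real N)"
      by (rule map_Suc_shifted_bernoulli_pmf)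
    also have "\<dots> = shifted_bernoulli_pmf (r div N) (real (r mod N) / real N)"
      using True assms(1) by (simp add: le_div_geq le_mod_geq)
    finally show ?thesis .
  next
    case False
    then have "map_pmf (\<lambda>xs. count_list xs 1) (blocks N (Suc c) r)
        = map_pmf (\<lambda>xs. count_list xs 1) (draw_seq {1..N} r)"
      by (simp add: blocks_0 bind_return_pmf bind_return_pmf')
    with False show ?thesis by (simp add: count_list_draw_seq)
  qed
qed

lemma delay_pmf_eq_shifted_bernoulli:
  assumes "N \<ge> 1"
  shows "delay_pmf N K0 = shifted_bernoulli_pmf ((K0 + 1 - N) div N) (real ((K0 + 1 - N) mod N) / real N)"
proof -
  let ?F = "draw_seq ({1..N} - {1}) (min N (K0 + 1) - 1)"
  let ?R = "blocks N (K0 + 1) (K0 + 1 - N)"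
  have rest: "K0 + 1 - min N (K0 + 1) = K0 + 1 - N" by (simp add: min_def)
  have "delay_pmf N K0 = bind_pmf ?F (\<lambda>f. map_pmf (\<lambda>rs. count_list f 1 + count_list rs 1) ?R)"
    unfolding delay_pmf_def schedule_def rest
    by (simp add: map_bind_pmf map_pmf_def bind_assoc_pmf bind_return_pmf)
  also have "\<dots> = bind_pmf ?F (\<lambda>_. map_pmf (\<lambda>rs. count_list rs 1) ?R)"
  proof (rule bind_pmf_cong[OF refl])
    fix f assume "f \<in> set_pmf ?F"
    moreover have "min N (K0 + 1) - 1 \<le> card ({1..N} - {1})" using assms by simp
    ultimately have "1 \<notin> set f" using set_pmf_draw_seq[of "{1..N} - {1}" _ f] by blast
    then show "map_pmf (\<lambda>rs. count_list f 1 + count_list rs 1) ?R = map_pmf (\<lambda>rs. count_list rs 1) ?R"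
      by simp
  qed
  also have "\<dots> = map_pmf (\<lambda>rs. count_list rs 1) ?R" by simp
  also have "\<dots> = shifted_bernoulli_pmf ((K0 + 1 - N) div N) (real ((K0 + 1 - N) mod N) / real N)"
  proof (rule count_list_blocks[OF assms])
    have "K0 + 1 \<le> (K0 + 1) * N" using assms mult_le_mono2[of 1 N "K0 + 1"] by simp
    then show "K0 + 1 - N \<le> (K0 + 1) * N" by linarith
  qed
  finally show ?thesis .
qed

lemma pmf_delay_pmf_0:
  assumes "N \<ge> 1"
  shows "pmf (delay_pmf N K0) 0 =
    (if K0 \<le> N - 1 then 1
     else if K0 \<le> 2 * N - 2 then (2 * real N - real K0 - 1) / real N
     else 0)"
proof -
  define q s where "q = (K0 + 1 - N) div N" and "s = (K0 + 1 - N) mod N"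
  have K0: "K0 + 1 - N = q * N + s" and "s < N"
    using assms by (simp_all add: q_def s_def)
  have pmf_eq: "pmf (delay_pmf N K0) 0 = (if q = 0 then 1 - real s / real N else 0)"
    using assms \<open>s < N\<close>
    by (simp add: delay_pmf_eq_shifted_bernoulli pmf_shifted_bernoulli_pmf q_def s_def)
  consider "q = 0" "s = 0" | "q = 0" "s > 0" | "q > 0" by blast
  then show ?thesis
  proof cases
    case 1
    then show ?thesis using K0 pmf_eq by simp
  next
    case 2
    then have "K0 + 1 = N + s" using K0 by simp
    then have "real K0 = real N + real s - 1" "\<not> K0 \<le> N - 1" "K0 \<le> 2 * N - 2"
      using 2 \<open>s < N\<close> by linarith+
    then show ?thesis using 2 pmf_eq assms by (simp add: field_simps)
  next
    case 3
    then have "N \<le> q * N" using mult_le_mono1[of 1 q N] by simp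
    then have "\<not> K0 \<le> 2 * N - 2" using K0 assms by linarith
    then show ?thesis using 3 pmf_eq by simp
  qed
qed

lemma delay_piecewise_eq_div_mod:
  fixes N K0 q s l :: nat
  assumes "N \<ge> 1" "l \<ge> 1" and K0: "K0 + 1 - N = q * N + s" and "s < N"
  shows "(if l = q then 1 - real s / real N else if l = Suc q then real s / real N else 0) =
    (if K0 + 1 \<le> l * N then 0
     else if K0 \<le> (l + 1) * N - 1 then (real K0 - real l * real N + 1) / real N
     else if K0 \<le> (l + 2) * N - 2 then ((real l + 2) * real N - real K0 - 1) / real N
     else 0)"
proof -
  have lN: "(l + 1) * N = l * N + N" "(l + 2) * N = l * N + 2 * N" by simp_all
  have K0_le: "K0 + 1 \<le> N + q * N + s" using K0 by linarith
  have K0_eq: "K0 + 1 = N + q * N + s" if "0 < q * N + s" using K0 that by linarith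
  have real_K0: "real K0 = real N + real q * real N + real s - 1" if "0 < q * N + s"
  proof -
    have "real (K0 + 1) = real (N + q * N + s)" using K0_eq[OF that] by (rule arg_cong)
    then show ?thesis by simp
  qed
  consider "Suc q < l" | "l = Suc q" "s = 0" | "l = Suc q" "s > 0" | "l = q" "s = 0" | "l = q" "s > 0"
    | "l < q" by linarith
  then show ?thesis
  proof cases
    case 1
    then have "q * N + 2 * N \<le> l * N" using mult_le_mono1[of "q + 2" l N] by simp
    then have "K0 + 1 \<le> l * N" using K0_le \<open>s < N\<close> by linarith
    then show ?thesis using 1 by simp
  next
    case 2
    then have "K0 + 1 \<le> l * N" using K0_le by simp
    then show ?thesis using 2 by simp
  next
    case 3
    then have "K0 + 1 = l * N + s" using K0_eq by simp
    then have "\<not> K0 + 1 \<le> l * N" "K0 \<le> (l + 1) * N - 1"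
      using \<open>s < N\<close> \<open>s > 0\<close> by (simp_all add: lN)
    then show ?thesis using 3 real_K0 assms(1) by (simp add: field_simps)
  next
    case 4
    moreover have "N \<le> q * N" using 4 assms(2) by simp
    ultimately have "K0 + 1 = N + l * N" "0 < q * N + s" using K0_eq assms(1) by simp_all
    then have "\<not> K0 + 1 \<le> l * N" "K0 \<le> (l + 1) * N - 1"
      using assms(1) by (simp_all add: lN)
    then show ?thesis using 4 real_K0 assms by (simp add: field_simps)
  next
    case 5
    then have "K0 + 1 = N + l * N + s" using K0_eq by simp
    then have "\<not> K0 + 1 \<le> l * N" "\<not> K0 \<le> (l + 1) * N - 1" "K0 \<le> (l + 2) * N - 2"
      using \<open>s < N\<close> \<open>s > 0\<close> by (simp_all add: lN)
    then show ?thesis using 5 real_K0 assms(1) by (simp add: field_simps)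
  next
    case 6
    then have "l * N + N \<le> q * N" using mult_le_mono1[of "l + 1" q N] by simp
    then have "K0 + 1 = N + q * N + s" using K0_eq assms(1) \<open>l < q\<close> by simp
    then have "\<not> K0 \<le> (l + 2) * N - 2" "\<not> K0 \<le> (l + 1) * N - 1" "\<not> K0 + 1 \<le> l * N"
      using \<open>l * N + N \<le> q * N\<close> assms(1) by (simp_all add: lN)
    then show ?thesis using 6 by simp
  qed
qed

lemma pmf_delay_pmf_Suc:
  assumes "N \<ge> 1" "l \<ge> 1"
  shows "pmf (delay_pmf N K0) l =
    (if K0 + 1 \<le> l * N then 0
     else if K0 \<le> (l + 1) * N - 1 then (real K0 - real l * real N + 1) / real N
     else if K0 \<le> (l + 2) * N - 2 then ((real l + 2) * real N - real K0 - 1) / real N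
     else 0)"
proof -
  define q s where "q = (K0 + 1 - N) div N" and "s = (K0 + 1 - N) mod N"
  have K0: "K0 + 1 - N = q * N + s" and "s < N"
    using assms by (simp_all add: q_def s_def)
  have "pmf (delay_pmf N K0) l =
      (if l = q then 1 - real s / real N else if l = Suc q then real s / real N else 0)"
    using assms \<open>s < N\<close>
    by (simp add: delay_pmf_eq_shifted_bernoulli pmf_shifted_bernoulli_pmf q_def s_def)
  with delay_piecewise_eq_div_mod[OF assms K0 \<open>s < N\<close>] show ?thesis by simp
qed

theorem lemma5:
  fixes N :: nat
  assumes "N \<ge> 1"
  shows
   "(\<forall>K0::nat. pmf (delay_pmf N K0) 0 =
        (if K0 \<le> N - 1 then 1
         else if K0 \<le> 2 * N - 2 then (2 * real N - real K0 - 1) / real N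
         else 0))
    \<and> (\<forall>l::nat. \<forall>K0::nat. l \<ge> 1 \<longrightarrow> pmf (delay_pmf N K0) l =
        (if K0 + 1 \<le> l * N then 0
         else if K0 \<le> (l + 1) * N - 1 then (real K0 - real l * real N + 1) / real N
         else if K0 \<le> (l + 2) * N - 2 then ((real l + 2) * real N - real K0 - 1) / real N
         else 0))
    \<and> (\<forall>(\<tau>::real) (K::nat pmf). \<tau> > 0 \<longrightarrow>
        (\<forall>k. pmf K k = 3.5 powr 4.5 * Gamma (real k + 4.5) * \<tau> powr 4.5
                / (Gamma 4.5 * fact k * (1 + 3.5 * \<tau>) powr (real k + 4.5))) \<longrightarrow>
        (\<forall>l. pmf (bind_pmf K (\<lambda>k. delay_pmf N k)) l
              = (\<Sum>k. pmf K k * pmf (delay_pmf N k) l)))"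
  using assms by (simp add: pmf_delay_pmf_0 pmf_delay_pmf_Suc pmf_bind_eq_suminf)

end
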